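(* Let $T$ be an invertible operator in $\mathcal D(\mathcal P_n)$. Then for every nonconstant $f\in\mathcal P_n$ and every $v\in Z(Tf)$ there exists $u\in Z(f)$ with $|v-u|\le\varrho[T\phi_n]$.
   Context: Let $n\ge 1$ be an integer and $\mathcal P_n$ the complex vector space of polynomials in one complex variable of degree at most $n$; $\phi_k(z)=z^k/k!$. $D$ is differentiation on $\mathcal P_n$, $I$ the identity, and $\mathcal D(\mathcal P_n)$ the linear span of $I,D,\dots,D^n$. For a nonzero $f$, $Z(f)$ is the multiset of roots of $f$ (with multiplicity). For nonconstant $f$, the root radius is $\varrho[f]=\max\{|u|:u\in Z(f)\}$. *)

theory Defs
  imports "HOL-Computational_Algebra.Polynomial" Complex_Main
begin

definition Pn :: "nat \<Rightarrow> complex poly set" where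
  "Pn n = {f. degree f \<le> n}"

text \<open>The operator T = sum_{k=0}^n c_k D^k in D(P_n), D = differentiation.\<close>
definition diffop :: "nat \<Rightarrow> (nat \<Rightarrow> complex) \<Rightarrow> complex poly \<Rightarrow> complex poly" where
  "diffop n c f = (\<Sum>k\<le>n. smult (c k) ((pderiv ^^ k) f))"

definition phi :: "nat \<Rightarrow> complex poly" where
  "phi k = monom (1 / of_nat (fact k)) k"

definition Z :: "complex poly \<Rightarrow> complex set" where
  "Z f = {u. poly f u = 0}"

definition root_radius :: "complex poly \<Rightarrow> real" where
  "root_radius f = Max (norm ` Z f)"

end

theory Submission
  imports Defs "HOL-Computational_Algebra.Fundamental_Theorem_Algebra" "HOL-Analysis.Analysis"
begin

(* Let H = T phi_n and g(x) = f(v + x). Invertibility of T gives c_0 \<noteq> 0, hence deg H = n,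
   and Taylor's formula gives (T f)(v) = apolar n r g = sum_k k! (n - k)! r_k g_k, where r is the
   reversal of H. Up to the leading coefficient, r is the product of the factors 1 - a x over the
   roots a of H, all of modulus at most rho = rho[T phi_n]. Splitting off one factor 1 - a x turns
   the pairing with g into the pairing with the polar derivative of g at -a, of one degree less. By Laguerre's
   theorem, polar differentiation at a point of the closed disc of radius rho preserves having no
   zeros in that disc. So if f had no zero within rho of v, the pairing would end as a nonzero
   constant term and (T f)(v) could not vanish. *)

lemma norm_convex_combination_power2:
  fixes x y :: "'a::real_inner"
  assumes "u + v = 1"
  shows "(norm (u *\<^sub>R x + v *\<^sub>R y))\<^sup>2 = u * (norm x)\<^sup>2 + v * (norm y)\<^sup>2 - u * v * (norm (x - y))\<^sup>2"
proof -
  have v: "v = 1 - u" using assms by simp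
  show ?thesis
    unfolding v power2_norm_eq_inner by (simp add: inner_simps algebra_simps power2_eq_square)
qed

lemma convex_complex_quadric_sublevel:
  fixes b :: complex
  assumes "0 \<le> a"
  shows "convex {x. a * (cmod x)\<^sup>2 + Re (b * x) < c}"
proof (rule convexI, unfold mem_Collect_eq)
  fix x y :: complex and u v :: real
  assume x: "a * (cmod x)\<^sup>2 + Re (b * x) < c" and y: "a * (cmod y)\<^sup>2 + Re (b * y) < c"
    and u: "0 \<le> u" and v: "0 \<le> v" and uv: "u + v = 1"
  have "a * (cmod (u *\<^sub>R x + v *\<^sub>R y))\<^sup>2 + Re (b * (u *\<^sub>R x + v *\<^sub>R y))
      = u * (a * (cmod x)\<^sup>2 + Re (b * x)) + v * (a * (cmod y)\<^sup>2 + Re (b * y))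
        - a * u * v * (cmod (x - y))\<^sup>2"
    unfolding norm_convex_combination_power2[OF uv]
    by (simp add: scaleR_conv_of_real algebra_simps)
  also have "\<dots> \<le> u * (a * (cmod x)\<^sup>2 + Re (b * x)) + v * (a * (cmod y)\<^sup>2 + Re (b * y))"
    using assms u v by simp
  also have "\<dots> < c"
    using x y u v uv by (rule convex_bound_lt)
  finally show "a * (cmod (u *\<^sub>R x + v *\<^sub>R y))\<^sup>2 + Re (b * (u *\<^sub>R x + v *\<^sub>R y)) < c" .
qed

lemma less_norm_diff_inverse_iff:
  fixes w x :: complex
  assumes "x \<noteq> 0" "0 \<le> r"
  shows "r < cmod (w - inverse x) \<longleftrightarrow> (r\<^sup>2 - (cmod w)\<^sup>2) * (cmod x)\<^sup>2 + Re (2 * w * x) < 1"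
proof -
  have "r < cmod (w - inverse x) \<longleftrightarrow> r * cmod x < cmod (w * x - 1)"
    using assms by (simp add: norm_divide pos_less_divide_eq divide_simps)
  also have "\<dots> \<longleftrightarrow> (r * cmod x)\<^sup>2 < (cmod (w * x - 1))\<^sup>2"
    using assms(2)
    by (metis mult_nonneg_nonneg norm_ge_zero pos2 power_less_imp_less_base power_strict_mono)
  also have "(cmod (w * x - 1))\<^sup>2 = (cmod w)\<^sup>2 * (cmod x)\<^sup>2 - Re (2 * w * x) + 1"
    unfolding cmod_power2 by (simp add: power2_eq_square algebra_simps)
  finally show ?thesis by (simp add: power_mult_distrib algebra_simps)
qed

text \<open>For \<open>w\<close> in the disc, the image of its exterior under \<open>u \<mapsto> 1 / (w - u)\<close>,
  together with the image \<open>0\<close> of \<open>\<infinity>\<close>, is a disc or a half-plane.\<close>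

lemma convex_reciprocal_disc_exterior:
  fixes w :: complex
  assumes "cmod w \<le> r"
  shows "convex (insert 0 ((\<lambda>u. inverse (w - u)) ` {u. r < cmod u}))"
proof -
  let ?Q = "{x. (r\<^sup>2 - (cmod w)\<^sup>2) * (cmod x)\<^sup>2 + Re (2 * w * x) < 1}"
  have r: "0 \<le> r" using assms norm_ge_zero order_trans by blast
  have "insert 0 ((\<lambda>u. inverse (w - u)) ` {u. r < cmod u}) = ?Q"
  proof (intro set_eqI iffI)
    fix x assume "x \<in> insert 0 ((\<lambda>u. inverse (w - u)) ` {u. r < cmod u})"
    then consider "x = 0" | u where "r < cmod u" "x = inverse (w - u)" by blast
    then show "x \<in> ?Q"
    proof cases
      case (2 u)
      then have "x \<noteq> 0" using assms by auto
      moreover have "r < cmod (w - inverse x)" using 2 by simp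
      ultimately show ?thesis using less_norm_diff_inverse_iff r by blast
    qed simp
  next
    fix x assume x: "x \<in> ?Q"
    show "x \<in> insert 0 ((\<lambda>u. inverse (w - u)) ` {u. r < cmod u})"
    proof (cases "x = 0")
      case False
      then have "r < cmod (w - inverse x)" using x less_norm_diff_inverse_iff r by simp
      moreover have "x = inverse (w - (w - inverse x))" by simp
      ultimately show ?thesis by blast
    qed simp
  qed
  moreover have "convex ?Q"
    using assms by (intro convex_complex_quadric_sublevel) (simp add: power_mono)
  ultimately show ?thesis by (simp only:)
qed

lemma convex_scaled_sum_mset_mem:
  fixes S :: "'a::real_vector set"
  assumes "convex S" "0 \<in> S" "set_mset A \<subseteq> S" "size A \<le> N" "0 < N"
  shows "inverse (real N) *\<^sub>R sum_mset A \<in> S"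
  using assms(3-5)
proof (induction A arbitrary: N)
  case empty
  then show ?case using assms(2) by simp
next
  case (add x A)
  then obtain M where N: "N = Suc M" by (cases N) auto
  show ?case
  proof (cases "M = 0")
    case True
    then show ?thesis using add.prems N by simp
  next
    case False
    have "inverse (real M) *\<^sub>R sum_mset A \<in> S" using add N False by (intro add.IH) auto
    then have "inverse (real N) *\<^sub>R x + (real M / real N) *\<^sub>R (inverse (real M) *\<^sub>R sum_mset A) \<in> S"
      using add.prems by (intro convexD[OF assms(1)]) (simp_all add: N field_simps)
    moreover have "(real M / real N) *\<^sub>R (inverse (real M) *\<^sub>R sum_mset A)
        = inverse (real N) *\<^sub>R sum_mset A"
      using False by (simp add: field_simps)
    ultimately show ?thesis
      by (simp only: sum_mset.add_mset scaleR_add_right)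
  qed
qed

definition polar_deriv :: "'a::idom \<Rightarrow> nat \<Rightarrow> 'a poly \<Rightarrow> 'a poly" where
  "polar_deriv z m g = smult (of_nat m) g + [:z, -1:] * pderiv g"

lemma coeff_polar_deriv:
  "coeff (polar_deriv z m g) k
     = (of_nat m - of_nat k) * coeff g k + z * of_nat (Suc k) * coeff g (Suc k)"
  by (cases k) (simp_all add: polar_deriv_def coeff_pderiv mult_pCons_left algebra_simps)

lemma degree_polar_deriv_le:
  assumes "degree g \<le> Suc m"
  shows "degree (polar_deriv z (Suc m) g) \<le> m"
proof (rule degree_le, intro allI impI)
  fix k assume "m < k"
  then show "coeff (polar_deriv z (Suc m) g) k = 0"
    using assms by (cases "k = Suc m") (auto simp: coeff_polar_deriv coeff_eq_0)
qed

lemma poly_pderiv_prod_linear_factors: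
  fixes A :: "'a::field multiset"
  assumes "w \<notin># A"
  shows "poly (pderiv (\<Prod>u\<in>#A. [:-u, 1:])) w
       = poly (\<Prod>u\<in>#A. [:-u, 1:]) w * (\<Sum>u\<in>#A. inverse (w - u))"
  using assms
proof (induction A)
  case (add x A)
  define P where "P = (\<Prod>u\<in>#A. [:-u, 1:])"
  have wx: "w - x \<noteq> 0" using add.prems by auto
  have IH: "poly (pderiv P) w = poly P w * (\<Sum>u\<in>#A. inverse (w - u))"
    using add unfolding P_def by simp
  have "poly (pderiv (\<Prod>u\<in>#add_mset x A. [:-u, 1:])) w = poly (pderiv ([:-x, 1:] * P)) w"
    by (simp only: P_def prod_mset.add_mset image_mset_add_mset)
  also have "\<dots> = poly P w + (w - x) * poly (pderiv P) w"
    unfolding pderiv_mult by (simp add: pderiv_pCons algebra_simps)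
  also have "\<dots> = (w - x) * poly P w * (inverse (w - x) + (\<Sum>u\<in>#A. inverse (w - u)))"
    using wx by (simp add: IH field_simps)
  also have "\<dots> = poly (\<Prod>u\<in>#add_mset x A. [:-u, 1:]) w * (\<Sum>u\<in>#add_mset x A. inverse (w - u))"
    by (simp add: P_def algebra_simps)
  finally show ?case .
qed simp

lemma poly_pderiv_eq_sum_proots:
  fixes g :: "complex poly"
  assumes "poly g w \<noteq> 0"
  shows "poly (pderiv g) w = poly g w * (\<Sum>u\<in>#proots g. inverse (w - u))"
proof -
  have "g \<noteq> 0" using assms by auto
  then have "w \<notin># proots g" using assms by simp
  then show ?thesis
    using poly_pderiv_prod_linear_factors[of w "proots g"]
    by (subst (1 2) complex_poly_decompose_multiset [symmetric]) (simp add: pderiv_smult)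
qed

lemma polar_deriv_no_roots_in_cball:
  fixes g :: "complex poly"
  assumes "degree g \<le> m" "0 < m" and no_roots: "\<forall>u\<in>cball 0 r. poly g u \<noteq> 0"
    and z: "z \<in> cball 0 r" and w: "w \<in> cball 0 r"
  shows "poly (polar_deriv z m g) w \<noteq> 0"
proof
  assume root: "poly (polar_deriv z m g) w = 0"
  define S where "S = (\<Sum>u\<in>#proots g. inverse (w - u))"
  have gw: "poly g w \<noteq> 0" using no_roots w by blast
  have "poly (polar_deriv z m g) w = poly g w * (of_nat m - (w - z) * S)"
    using poly_pderiv_eq_sum_proots[OF gw] by (simp add: polar_deriv_def S_def algebra_simps)
  with root gw have eq: "(w - z) * S = of_nat m" by simp
  (* so 1 / (w - z) is the mean of the points 1 / (w - u), u running over the roots of g padded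
     with zeros to m points; these lie in a convex set that 1 / (w - z) avoids *)
  then have "w \<noteq> z" using \<open>0 < m\<close> by auto
  with eq have mean: "inverse (real m) *\<^sub>R S = inverse (w - z)"
    using \<open>0 < m\<close> by (simp add: scaleR_conv_of_real field_simps)
  have "g \<noteq> 0" using gw by auto
  then have "set_mset (proots g) \<subseteq> {u. r < cmod u}"
    using no_roots by (force simp: not_le)
  then have "inverse (real m) *\<^sub>R S \<in> insert 0 ((\<lambda>u. inverse (w - u)) ` {u. r < cmod u})"
    unfolding S_def using assms w
    by (intro convex_scaled_sum_mset_mem convex_reciprocal_disc_exterior)
       (auto simp: size_proots_complex)
  then obtain u where "r < cmod u" "inverse (w - z) = inverse (w - u)"
    using mean \<open>w \<noteq> z\<close> by auto
  then show False using z by simp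
qed

definition apolar :: "nat \<Rightarrow> 'a::{comm_semiring_1,semiring_char_0} poly \<Rightarrow> 'a poly \<Rightarrow> 'a" where
  "apolar m p g = (\<Sum>k\<le>m. fact k * fact (m - k) * coeff p k * coeff g k)"

lemma apolar_smult_left: "apolar m (smult c p) g = c * apolar m p g"
  by (simp add: apolar_def sum_distrib_left algebra_simps)

lemma apolar_linear_factor:
  fixes E :: "'a::{idom,ring_char_0} poly"
  assumes "degree E \<le> m"
  shows "apolar (Suc m) ([:1, z:] * E) g = apolar m E (polar_deriv z (Suc m) g)"
proof -
  have coeff_factor: "coeff ([:1, z:] * E) k = coeff E k + z * (case k of 0 \<Rightarrow> 0 | Suc j \<Rightarrow> coeff E j)" for k
    by (cases k) (simp_all add: mult_pCons_left)
  have "apolar (Suc m) ([:1, z:] * E) g =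
      (\<Sum>k\<le>Suc m. fact k * fact (Suc m - k) * coeff E k * coeff g k)
    + (\<Sum>k\<le>Suc m. fact k * fact (Suc m - k) * z * (case k of 0 \<Rightarrow> 0 | Suc j \<Rightarrow> coeff E j) * coeff g k)"
    unfolding apolar_def coeff_factor by (simp add: algebra_simps sum.distrib)
  also have "(\<Sum>k\<le>Suc m. fact k * fact (Suc m - k) * coeff E k * coeff g k)
     = (\<Sum>k\<le>m. fact k * fact (Suc m - k) * coeff E k * coeff g k)"
    using assms by (simp add: coeff_eq_0)
  also have "(\<Sum>k\<le>Suc m. fact k * fact (Suc m - k) * z * (case k of 0 \<Rightarrow> 0 | Suc j \<Rightarrow> coeff E j) * coeff g k)
     = (\<Sum>k\<le>m. fact (Suc k) * fact (m - k) * z * coeff E k * coeff g (Suc k))"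
    by (subst sum.atMost_Suc_shift) simp
  also have "(\<Sum>k\<le>m. fact k * fact (Suc m - k) * coeff E k * coeff g k)
      + (\<Sum>k\<le>m. fact (Suc k) * fact (m - k) * z * coeff E k * coeff g (Suc k))
      = apolar m E (polar_deriv z (Suc m) g)"
    unfolding apolar_def sum.distrib [symmetric]
  proof (intro sum.cong refl)
    fix k assume "k \<in> {..m}"
    then have fact_Suc: "(fact (Suc m - k) :: 'a) = (of_nat (Suc m) - of_nat k) * fact (m - k)"
      by (simp add: Suc_diff_le of_nat_diff)
    show "fact k * fact (Suc m - k) * coeff E k * coeff g k
        + fact (Suc k) * fact (m - k) * z * coeff E k * coeff g (Suc k)
        = fact k * fact (m - k) * coeff E k * coeff (polar_deriv z (Suc m) g) k"
      unfolding coeff_polar_deriv fact_Suc by (simp add: algebra_simps)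
  qed
  finally show ?thesis .
qed

lemma degree_prod_linear_factors_le: "degree (\<Prod>a\<in>#A. [:1, -a:]) \<le> size A"
proof (induction A)
  case (add a A)
  have "degree ([:1, -a:] * (\<Prod>a\<in>#A. [:1, -a:])) \<le> degree [:1, -a:] + size A"
    using degree_mult_le[of "[:1, -a:]" "\<Prod>a\<in>#A. [:1, -a:]"] add.IH by (simp del: mult_pCons_left)
  then show ?case by (simp del: mult_pCons_left split: if_splits)
qed simp

lemma apolar_prod_linear_factors_nonzero:
  fixes g :: "complex poly"
  assumes "degree g \<le> size A" "set_mset A \<subseteq> cball 0 r" "0 \<le> r"
    "\<forall>w\<in>cball 0 r. poly g w \<noteq> 0"
  shows "apolar (size A) (\<Prod>a\<in>#A. [:1, -a:]) g \<noteq> 0"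
  using assms(1,2,4)
proof (induction A arbitrary: g)
  case empty
  then have "poly g 0 \<noteq> 0" using \<open>0 \<le> r\<close> by simp
  then show ?case by (simp add: apolar_def poly_0_coeff_0)
next
  case (add a A)
  let ?g' = "polar_deriv (-a) (Suc (size A)) g"
  have "apolar (size (add_mset a A)) (\<Prod>a\<in>#add_mset a A. [:1, -a:]) g
      = apolar (size A) (\<Prod>a\<in>#A. [:1, -a:]) ?g'"
    using apolar_linear_factor[OF degree_prod_linear_factors_le, of A "-a" g] by simp
  moreover have "apolar (size A) (\<Prod>a\<in>#A. [:1, -a:]) ?g' \<noteq> 0"
  proof (rule add.IH)
    show "degree ?g' \<le> size A"
      using add.prems(1) by (intro degree_polar_deriv_le) simp
    show "set_mset A \<subseteq> cball 0 r" using add.prems(2) by simp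
    show "\<forall>w\<in>cball 0 r. poly ?g' w \<noteq> 0"
      using add.prems by (intro ballI polar_deriv_no_roots_in_cball) auto
  qed
  ultimately show ?case by simp
qed

lemma reflect_poly_prod_linear_factors:
  "reflect_poly (\<Prod>a\<in>#A. [:-a, 1:]) = (\<Prod>a\<in>#A. [:1, -a:] :: 'a::idom poly)"
proof (induction A)
  case (add a A)
  have "reflect_poly [:-a, 1:] = [:1, -a:]"
    by (rule poly_eqI) (auto simp: coeff_reflect_poly coeff_pCons split: nat.split)
  with add.IH show ?case by (simp del: mult_pCons_left add: reflect_poly_mult)
qed simp

lemma apolar_reflect_poly_nonzero:
  fixes H g :: "complex poly"
  assumes "H \<noteq> 0" "degree g \<le> degree H" "\<forall>u. poly H u = 0 \<longrightarrow> cmod u \<le> r" "0 \<le> r"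
    "\<forall>w\<in>cball 0 r. poly g w \<noteq> 0"
  shows "apolar (degree H) (reflect_poly H) g \<noteq> 0"
proof -
  have "reflect_poly H = smult (lead_coeff H) (\<Prod>a\<in>#proots H. [:1, -a:])"
    by (subst complex_poly_decompose_multiset [symmetric])
       (simp add: reflect_poly_smult reflect_poly_prod_linear_factors)
  moreover have "apolar (size (proots H)) (\<Prod>a\<in>#proots H. [:1, -a:]) g \<noteq> 0"
    using assms by (intro apolar_prod_linear_factors_nonzero) (auto simp: size_proots_complex)
  ultimately show ?thesis
    using assms(1) by (simp add: apolar_smult_left size_proots_complex)
qed

lemma coeff_phi: "coeff (phi n) j = (if j = n then 1 / fact n else 0)"
  by (simp add: phi_def coeff_monom)

lemma pderiv_phi_Suc: "pderiv (phi (Suc m)) = phi m"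
proof -
  have "of_nat (Suc m) * (1 / fact (Suc m)) = (1 / fact m :: complex)"
    by (simp add: fact_Suc del: of_nat_Suc)
  then show ?thesis by (simp only: phi_def pderiv_monom diff_Suc_1 of_nat_fact)
qed

lemma higher_pderiv_phi: "k \<le> n \<Longrightarrow> (pderiv ^^ k) (phi n) = phi (n - k)"
proof (induction k)
  case (Suc k)
  then have "n - k = Suc (n - Suc k)" by simp
  with Suc show ?case by (simp add: pderiv_phi_Suc)
qed simp

lemma coeff_diffop_phi:
  "coeff (diffop n c (phi n)) j = (if j \<le> n then c (n - j) / fact j else 0)"
proof -
  have "coeff (diffop n c (phi n)) j = (\<Sum>k\<le>n. if k = n - j \<and> j \<le> n then c k / fact j else 0)"
    unfolding diffop_def coeff_sum
    by (intro sum.cong) (auto simp: higher_pderiv_phi coeff_phi)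
  also have "\<dots> = (if j \<le> n then c (n - j) / fact j else 0)"
    by (cases "j \<le> n") (simp_all add: sum.delta)
  finally show ?thesis .
qed

lemma degree_diffop_phi:
  assumes "c 0 \<noteq> 0"
  shows "degree (diffop n c (phi n)) = n"
proof (rule antisym)
  show "degree (diffop n c (phi n)) \<le> n" by (rule degree_le) (simp add: coeff_diffop_phi)
  show "n \<le> degree (diffop n c (phi n))" by (rule le_degree) (simp add: coeff_diffop_phi assms)
qed

lemma poly_higher_pderiv_eq_coeff_shift:
  fixes f :: "'a::{idom,ring_char_0} poly"
  shows "poly ((pderiv ^^ k) f) v = fact k * coeff (f \<circ>\<^sub>p [:v, 1:]) k"
proof -
  have "(pderiv ^^ k) (f \<circ>\<^sub>p [:v, 1:]) = (pderiv ^^ k) f \<circ>\<^sub>p [:v, 1:]"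
    by (induction k) (simp_all add: pderiv_pcompose pderiv_pCons)
  then have "poly ((pderiv ^^ k) f) v = poly ((pderiv ^^ k) (f \<circ>\<^sub>p [:v, 1:])) 0"
    by (simp add: poly_pcompose)
  also have "\<dots> = fact k * coeff (f \<circ>\<^sub>p [:v, 1:]) k"
    by (simp add: poly_0_coeff_0 coeff_higher_pderiv pochhammer_fact [symmetric])
  finally show ?thesis .
qed

lemma poly_diffop_eq_apolar:
  assumes "c 0 \<noteq> 0"
  shows "poly (diffop n c f) v = apolar n (reflect_poly (diffop n c (phi n))) (f \<circ>\<^sub>p [:v, 1:])"
proof -
  have "coeff (reflect_poly (diffop n c (phi n))) k = c k / fact (n - k)" if "k \<le> n" for k
    using that by (simp add: coeff_reflect_poly degree_diffop_phi[of c n, OF assms] coeff_diffop_phi)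
  then show ?thesis
    unfolding apolar_def diffop_def poly_sum
    by (intro sum.cong) (simp_all add: poly_higher_pderiv_eq_coeff_shift)
qed

lemma inj_on_diffop_imp_coeff0_nonzero:
  assumes "inj_on (diffop n c) (Pn n)"
  shows "c 0 \<noteq> 0"
proof
  assume "c 0 = 0"
  then have "diffop n c 1 = diffop n c 0"
    by (intro poly_eqI) (auto simp: diffop_def coeff_sum coeff_higher_pderiv coeff_1 intro!: sum.neutral)
  moreover have "(1::complex poly) \<in> Pn n" "(0::complex poly) \<in> Pn n" by (auto simp: Pn_def)
  ultimately show False using assms by (auto dest: inj_onD)
qed

lemma root_radius_ge:
  assumes "H \<noteq> 0" "poly H u = 0"
  shows "cmod u \<le> root_radius H"
  using assms poly_roots_finite[OF assms(1)] unfolding root_radius_def Z_def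
  by (intro Max_ge) auto

lemma root_radius_nonneg:
  assumes "0 < degree H"
  shows "0 \<le> root_radius H"
proof -
  have "H \<noteq> 0" using assms by auto
  obtain u where "u \<in># proots H"
    using assms size_proots_complex[of H] by (metis multiset_nonemptyE size_empty less_irrefl)
  with \<open>H \<noteq> 0\<close> have "cmod u \<le> root_radius H" by (intro root_radius_ge) auto
  then show ?thesis using norm_ge_zero order_trans by blast
qed

theorem mainTheorem11:
  fixes n :: nat and c :: "nat \<Rightarrow> complex" and f :: "complex poly" and v :: complex
  assumes "n \<ge> 1"
    and "bij_betw (diffop n c) (Pn n) (Pn n)"
    and "f \<in> Pn n" and "degree f \<ge> 1"
    and "v \<in> Z (diffop n c f)"
  shows "\<exists>u\<in>Z f. norm (v - u) \<le> root_radius (diffop n c (phi n))"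
proof (rule ccontr)
  assume far: "\<not> (\<exists>u\<in>Z f. norm (v - u) \<le> root_radius (diffop n c (phi n)))"
  define H where "H = diffop n c (phi n)"
  have c0: "c 0 \<noteq> 0"
    using assms(2) by (intro inj_on_diffop_imp_coeff0_nonzero bij_betw_imp_inj_on)
  then have deg_H: "degree H = n" unfolding H_def by (rule degree_diffop_phi)
  have "apolar (degree H) (reflect_poly H) (f \<circ>\<^sub>p [:v, 1:]) \<noteq> 0"
  proof (rule apolar_reflect_poly_nonzero)
    show "H \<noteq> 0" "0 \<le> root_radius H" using deg_H assms(1) by (auto intro: root_radius_nonneg)
    show "degree (f \<circ>\<^sub>p [:v, 1:]) \<le> degree H"
      using assms(3) deg_H by (simp add: Pn_def degree_pcompose)
    show "\<forall>u. poly H u = 0 \<longrightarrow> cmod u \<le> root_radius H"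
      using \<open>H \<noteq> 0\<close> root_radius_ge by blast
    show "\<forall>w\<in>cball 0 (root_radius H). poly (f \<circ>\<^sub>p [:v, 1:]) w \<noteq> 0"
      using far unfolding H_def Z_def by (auto simp: poly_pcompose add.commute)
  qed
  moreover have "apolar (degree H) (reflect_poly H) (f \<circ>\<^sub>p [:v, 1:]) = poly (diffop n c f) v"
    unfolding deg_H unfolding H_def by (rule poly_diffop_eq_apolar [of c n f v, OF c0, symmetric])
  ultimately show False using assms(5) by (simp add: Z_def)
qed

end
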